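(* Let $f\colon X\to Y$ be a perfect map between metrizable spaces, $d$ a compatible metric on $X$, $(M,\varrho)$ a complete metric space, $m,n\ge1$, $g_0\in C(X,M)$ and $\varepsilon\colon X\to(0,1/64]$ continuous. Equip $C(X,M)$ with the compact-open topology and define $\Phi_\varepsilon(y)=\mathcal{K}(m,n,y)\cap B_\varrho(g_0,\varepsilon)$ for $y\in Y$. If $y_0\in Y$ and $K\subset\Phi_\varepsilon(y_0)$ is compact, then there is a neighborhood $V(y_0)$ of $y_0$ in $Y$ such that $K\subset\Phi_\varepsilon(y)$ for every $y\in V(y_0)$.
   Context: $B_\varrho(g_0,\varepsilon)=\{g\in C(X,M):\varrho(g(x),g_0(x))<\varepsilon(x)\ \forall x\in X\}$. For $A\subset X$, $B(A,\delta)=\{x:d(x,A)<\delta\}$. $C(x,g|f^{-1}(y))$ is the component of $g^{-1}(g(x))\cap f^{-1}(y)$ containing $x$. $\mathcal{K}(m,n,y)$ is the set of $g\in C(X,M)$ such that for every subcontinuum $L\subset f^{-1}(y)$ with $\operatorname{diam}g(L)\ge1/n$ there is $x\in L$ with $C(x,g|f^{-1}(y))\subset B(L,1/m)$. *)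

theory Defs
  imports "HOL-Analysis.Analysis"
begin

definition Cmaps :: "('a::topological_space \<Rightarrow> 'b::topological_space) set" where
  "Cmaps = {g. continuous_on UNIV g}"

definition compact_open_topology ::
  "('a::topological_space \<Rightarrow> 'b::topological_space) topology" where
  "compact_open_topology = topology_generated_by
     {{g \<in> Cmaps. g ` C \<subseteq> U} | C U. compact C \<and> open U}"

definition perfect_map :: "('a::topological_space \<Rightarrow> 'b::topological_space) \<Rightarrow> bool" where
  "perfect_map f \<longleftrightarrow> continuous_on UNIV f \<and> (\<forall>A. closed A \<longrightarrow> closed (f ` A))
      \<and> (\<forall>y. compact (f -` {y}))"

definition Bfun :: "('a::topological_space \<Rightarrow> 'b::metric_space) \<Rightarrow> ('a \<Rightarrow> real) \<Rightarrow> ('a \<Rightarrow> 'b) set" where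
  "Bfun g0 eps = {g \<in> Cmaps. \<forall>x. dist (g x) (g0 x) < eps x}"

definition Bset :: "'a::metric_space set \<Rightarrow> real \<Rightarrow> 'a set" where
  "Bset A \<delta> = {x. infdist x A < \<delta>}"

definition Ccomp :: "'a::metric_space \<Rightarrow> ('a \<Rightarrow> 'c) \<Rightarrow> ('a \<Rightarrow> 'b) \<Rightarrow> 'b \<Rightarrow> 'a set" where
  "Ccomp x g f y = connected_component_set (g -` {g x} \<inter> f -` {y}) x"

definition continuum :: "'a::topological_space set \<Rightarrow> bool" where
  "continuum L \<longleftrightarrow> L \<noteq> {} \<and> compact L \<and> connected L"

definition Kset :: "('a::metric_space \<Rightarrow> 'b) \<Rightarrow> nat \<Rightarrow> nat \<Rightarrow> 'b \<Rightarrow> ('a \<Rightarrow> 'c::metric_space) set" where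
  "Kset f m n y = {g \<in> Cmaps. \<forall>L. continuum L \<and> L \<subseteq> f -` {y} \<and> diameter (g ` L) \<ge> 1 / real n
      \<longrightarrow> (\<exists>x\<in>L. Ccomp x g f y \<subseteq> Bset L (1 / real m))}"

end

theory Submission
  imports Defs "HOL-Complex_Analysis.Great_Picard"
begin

text \<open>
  The part \<open>K \<subseteq> B(g\<^sub>0,\<epsilon>)\<close> of the claim does not depend on \<open>y\<close>, so only the
  inclusion \<open>K \<subseteq> \<K>(m,n,y)\<close> near \<open>y\<^sub>0\<close> matters.  If it failed, there would be \<open>y\<^sub>k \<rightarrow> y\<^sub>0\<close>,
  maps \<open>G\<^sub>k \<in> K\<close> and continua \<open>L\<^sub>k \<subseteq> f\<^sup>-\<^sup>1(y\<^sub>k)\<close> with \<open>diam G\<^sub>k(L\<^sub>k) \<ge> 1/n\<close> all of whose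
  points have components \<open>C(x,G\<^sub>k|f\<^sup>-\<^sup>1(y\<^sub>k))\<close> leaving \<open>B(L\<^sub>k,1/m)\<close>.  Everything lives in the
  compact set \<open>Z = f\<^sup>-\<^sup>1({y\<^sub>0} \<union> {y\<^sub>k})\<close> (perfectness of \<open>f\<close>).  Passing to subsequences,
  \<open>G\<^sub>k \<rightarrow> g \<in> K\<close> uniformly on \<open>Z\<close> (compactness of \<open>K\<close> in the compact-open topology) and
  \<open>L\<^sub>k \<rightarrow> L\<close> in the sense of Kuratowski (a Blaschke-type selection theorem).  Then \<open>L\<close> is a
  continuum in \<open>f\<^sup>-\<^sup>1(y\<^sub>0)\<close> with \<open>diam g(L) \<ge> 1/n\<close>, yet the far components persist in the
  limit, contradicting \<open>g \<in> \<K>(m,n,y\<^sub>0)\<close>.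
\<close>

lemma strict_mono_choice:
  fixes P :: "nat \<Rightarrow> nat \<Rightarrow> bool"
  assumes "\<And>j N. \<exists>k\<ge>N. P j k"
  shows "\<exists>r. strict_mono r \<and> (\<forall>j. P j (r j))"
proof -
  have "\<exists>r. \<forall>j. P j (r j) \<and> r j < r (Suc j)"
  proof (rule dependent_nat_choice)
    show "\<exists>k. P 0 k" using assms by blast
    fix k j assume "P j k"
    obtain k' where "k' \<ge> Suc k" "P (Suc j) k'" using assms by blast
    then show "\<exists>k'. P (Suc j) k' \<and> k < k'" by auto
  qed
  then obtain r where "\<forall>j. P j (r j) \<and> r j < r (Suc j)" by blast
  then show ?thesis unfolding strict_mono_Suc_iff by blast
qed

lemma infdist_less_exists:
  fixes x :: "'a::metric_space"
  assumes "infdist x A < e" "A \<noteq> {}"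
  shows "\<exists>a\<in>A. dist x a < e"
  using assms unfolding infdist_notempty[OF assms(2)] by (simp add: cINF_less_iff)

lemma sequence_approaching_point:
  fixes l :: "'a::metric_space"
  assumes lim: "(\<lambda>k. infdist l (A k)) \<longlonglongrightarrow> 0" and ne: "\<And>k. A k \<noteq> {}"
  obtains w where "\<And>k. w k \<in> A k" "w \<longlonglongrightarrow> l"
proof -
  have "\<forall>k. \<exists>a\<in>A k. dist l a < infdist l (A k) + 1 / real (Suc k)"
    by (intro allI infdist_less_exists[OF _ ne]) simp
  then obtain w where "\<forall>k. w k \<in> A k \<and> dist l (w k) < infdist l (A k) + 1 / real (Suc k)"
    unfolding Bex_def by (rule choice[THEN exE])
  then have w: "\<And>k. w k \<in> A k"
    and close: "\<And>k. dist l (w k) < infdist l (A k) + 1 / real (Suc k)"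
    by simp_all
  have "(\<lambda>k. infdist l (A k) + 1 / real (Suc k)) \<longlonglongrightarrow> 0 + 0"
    by (intro tendsto_add lim LIMSEQ_inverse_real_of_nat[unfolded inverse_eq_divide])
  then have bound: "(\<lambda>k. infdist l (A k) + 1 / real (Suc k)) \<longlonglongrightarrow> 0" by simp
  have "(\<lambda>k. dist (w k) l) \<longlonglongrightarrow> 0"
  proof (rule Lim_null_comparison[OF always_eventually bound], rule allI)
    show "norm (dist (w k) l) \<le> infdist l (A k) + 1 / real (Suc k)" for k
      using close[of k] by (simp add: dist_commute)
  qed
  then have "w \<longlonglongrightarrow> l" by (rule tendsto_dist_iff[THEN iffD2])
  with w show thesis by (rule that)
qed

definition kuratowski_limit :: "(nat \<Rightarrow> 'a::metric_space set) \<Rightarrow> 'a set \<Rightarrow> bool" where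
  "kuratowski_limit A L \<longleftrightarrow>
     (\<forall>l\<in>L. (\<lambda>k. infdist l (A k)) \<longlonglongrightarrow> 0) \<and>
     (\<forall>(s :: nat \<Rightarrow> nat) w z. strict_mono s \<longrightarrow> (\<forall>k. w k \<in> A (s k)) \<longrightarrow> w \<longlonglongrightarrow> z \<longrightarrow> z \<in> L)"

lemma kuratowski_limit_lower:
  assumes "kuratowski_limit A L" "l \<in> L"
  shows "(\<lambda>k. infdist l (A k)) \<longlonglongrightarrow> 0"
  using assms unfolding kuratowski_limit_def by (elim conjE) (erule bspec)

lemma kuratowski_limit_upper:
  assumes "kuratowski_limit A L" "strict_mono (s :: nat \<Rightarrow> nat)" "\<And>k. w k \<in> A (s k)" "w \<longlonglongrightarrow> z"
  shows "z \<in> L"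
proof -
  have "strict_mono s \<longrightarrow> (\<forall>k. w k \<in> A (s k)) \<longrightarrow> w \<longlonglongrightarrow> z \<longrightarrow> z \<in> L"
    using assms(1) unfolding kuratowski_limit_def by (elim conjE) (erule allE)+
  with assms(2-4) show ?thesis by simp
qed

lemma kuratowski_limit_upper_id:
  "kuratowski_limit A L \<Longrightarrow> (\<And>k. w k \<in> A k) \<Longrightarrow> w \<longlonglongrightarrow> z \<Longrightarrow> z \<in> L"
  using kuratowski_limit_upper[of A L id w z] by (simp add: strict_mono_id)

lemma kuratowski_limit_approx:
  assumes "kuratowski_limit A L" "l \<in> L" "\<And>k. A k \<noteq> {}"
  obtains w where "\<And>k. w k \<in> A k" "w \<longlonglongrightarrow> l"
  using sequence_approaching_point[OF kuratowski_limit_lower[OF assms(1,2)] assms(3)] by blast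

text \<open>
  Kuratowski limits are closed: a limit \<open>z\<close> of points of \<open>L\<close> still has distance tending to
  \<open>0\<close> from the \<open>A k\<close>, hence is a limit of points of the \<open>A k\<close>.
\<close>
lemma kuratowski_limit_closed:
  assumes lim: "kuratowski_limit A L" and ne: "\<And>k. A k \<noteq> {}"
  shows "closed L"
  unfolding closed_sequential_limits
proof (intro allI impI, elim conjE)
  fix x z assume x: "\<forall>j. x j \<in> L" and xz: "x \<longlonglongrightarrow> z"
  have "(\<lambda>k. infdist z (A k)) \<longlonglongrightarrow> 0"
    unfolding tendsto_iff
  proof (intro allI impI)
    fix e :: real assume "e > 0"
    then obtain j where j: "dist (x j) z < e/2"
      using xz unfolding lim_sequentially by (meson half_gt_zero order_refl)
    have "\<forall>\<^sub>F k in sequentially. dist (infdist (x j) (A k)) 0 < e/2"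
      using tendsto_iff[THEN iffD1, rule_format, OF kuratowski_limit_lower[OF lim], of "x j" "e/2"]
        x \<open>e > 0\<close> by simp
    then show "\<forall>\<^sub>F k in sequentially. dist (infdist z (A k)) 0 < e"
    proof (rule eventually_mono)
      fix k assume "dist (infdist (x j) (A k)) 0 < e/2"
      moreover have "infdist z (A k) \<le> infdist (x j) (A k) + dist z (x j)"
        by (rule infdist_triangle)
      ultimately show "dist (infdist z (A k)) 0 < e"
        using j infdist_nonneg[of z "A k"] by (simp add: dist_commute)
    qed
  qed
  then obtain w where "\<And>k. w k \<in> A k" "w \<longlonglongrightarrow> z"
    using sequence_approaching_point ne by blast
  then show "z \<in> L" by (rule kuratowski_limit_upper_id[OF lim])
qed

lemma kuratowski_limit_subset:
  assumes lim: "kuratowski_limit A L" and ne: "\<And>k. A k \<noteq> {}"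
    and Z: "closed Z" and AZ: "\<And>k. A k \<subseteq> Z"
  shows "L \<subseteq> Z"
proof
  fix l assume "l \<in> L"
  then obtain w where "\<And>k. w k \<in> A k" "w \<longlonglongrightarrow> l"
    using kuratowski_limit_approx[OF lim _ ne] by blast
  with Z AZ show "l \<in> Z" by (meson closed_sequentially subsetD)
qed

lemma kuratowski_limit_nonempty:
  assumes lim: "kuratowski_limit A L" and Z: "compact Z"
    and AZ: "\<And>k. A k \<subseteq> Z" and ne: "\<And>k. A k \<noteq> {}"
  shows "L \<noteq> {}"
proof -
  have "\<forall>k. \<exists>a. a \<in> A k" using ne by blast
  then obtain w where w: "\<And>k. w k \<in> A k" by metis
  then obtain l s where "strict_mono s" "(w \<circ> s) \<longlonglongrightarrow> l"
    using compact_imp_seq_compact[OF Z] AZ unfolding seq_compact_def by (meson subsetD)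
  then have "l \<in> L"
    using kuratowski_limit_upper[OF lim, of s "w \<circ> s"] w by simp
  then show ?thesis by blast
qed

text \<open>
  Within a compact set, the sets \<open>A k\<close> eventually lie in every open neighbourhood of the
  limit (otherwise points outside it would cluster at a point of the limit).
\<close>
lemma kuratowski_limit_eventually_inside:
  assumes lim: "kuratowski_limit A L" and Z: "compact Z" and AZ: "\<And>k. A k \<subseteq> Z"
    and W: "open W" "L \<subseteq> W"
  shows "\<forall>\<^sub>F k in sequentially. A k \<subseteq> W"
proof (rule ccontr)
  assume "\<not> ?thesis"
  then have often: "\<exists>k\<ge>N. \<not> A k \<subseteq> W" for N
    by (simp add: eventually_sequentially)
  have "\<exists>s::nat \<Rightarrow> nat. strict_mono s \<and> (\<forall>j. \<not> A (s j) \<subseteq> W)"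
    using strict_mono_choice[where P="\<lambda>_ k. \<not> A k \<subseteq> W"] often by blast
  then obtain s :: "nat \<Rightarrow> nat" where s: "strict_mono s" "\<And>j. \<not> A (s j) \<subseteq> W" by blast
  then have "\<forall>j. \<exists>x. x \<in> A (s j) \<and> x \<notin> W" by blast
  then obtain w where w: "\<And>j. w j \<in> A (s j)" "\<And>j. w j \<notin> W" by metis
  then obtain l r where r: "strict_mono r" "(w \<circ> r) \<longlonglongrightarrow> l"
    using compact_imp_seq_compact[OF Z] AZ unfolding seq_compact_def by (meson subsetD)
  have "l \<in> L"
    using kuratowski_limit_upper[OF lim strict_mono_o[OF s(1) r(1)], of "w \<circ> r"] w r by simp
  then have "\<forall>\<^sub>F j in sequentially. (w \<circ> r) j \<in> W"
    using topological_tendstoD[OF r(2)] W by blast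
  then show False using w(2) by (auto simp: eventually_sequentially)
qed

lemma kuratowski_limit_eventually_meets:
  assumes lim: "kuratowski_limit A L" and ne: "\<And>k. A k \<noteq> {}"
    and W: "open W" and l: "l \<in> L" "l \<in> W"
  shows "\<forall>\<^sub>F k in sequentially. A k \<inter> W \<noteq> {}"
proof -
  obtain e where e: "e > 0" "ball l e \<subseteq> W" using W l by (meson openE)
  have "\<forall>\<^sub>F k in sequentially. infdist l (A k) < e"
    using tendsto_iff[THEN iffD1, rule_format, OF kuratowski_limit_lower[OF lim l(1)] e(1)]
    by (simp add: infdist_nonneg)
  then show ?thesis
  proof (rule eventually_mono)
    fix k assume "infdist l (A k) < e"
    then obtain a where "a \<in> A k" "dist l a < e" using infdist_less_exists ne by blast
    then show "A k \<inter> W \<noteq> {}" using e(2) by auto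
  qed
qed

lemma kuratowski_limit_connected:
  assumes lim: "kuratowski_limit A L" and Z: "compact Z" and AZ: "\<And>k. A k \<subseteq> Z"
    and ne: "\<And>k. A k \<noteq> {}" and conn: "\<And>k. connected (A k)"
  shows "connected L"
  unfolding connected_closed_set[OF kuratowski_limit_closed[OF lim ne]]
proof (intro notI, elim exE conjE)
  fix P Q assume "closed P" "closed Q" "P \<noteq> {}" "Q \<noteq> {}" and PQ: "P \<union> Q = L" "P \<inter> Q = {}"
  then obtain U V where UV: "open U" "open V" "P \<subseteq> U" "Q \<subseteq> V" "U \<inter> V = {}"
    using t4_space by metis
  obtain p q where "p \<in> P" "q \<in> Q" using \<open>P \<noteq> {}\<close> \<open>Q \<noteq> {}\<close> by blast
  have "\<forall>\<^sub>F k in sequentially. A k \<subseteq> U \<union> V"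
    using kuratowski_limit_eventually_inside[OF lim Z AZ, of "U \<union> V"] UV PQ by blast
  moreover have "\<forall>\<^sub>F k in sequentially. A k \<inter> U \<noteq> {}"
    using kuratowski_limit_eventually_meets[OF lim ne \<open>open U\<close>, of p] UV PQ \<open>p \<in> P\<close> by blast
  moreover have "\<forall>\<^sub>F k in sequentially. A k \<inter> V \<noteq> {}"
    using kuratowski_limit_eventually_meets[OF lim ne \<open>open V\<close>, of q] UV PQ \<open>q \<in> Q\<close> by blast
  ultimately have "\<forall>\<^sub>F k in sequentially. A k \<subseteq> U \<union> V \<and> A k \<inter> U \<noteq> {} \<and> A k \<inter> V \<noteq> {}"
    by (rule eventually_conj[OF _ eventually_conj])
  then obtain k where "A k \<subseteq> U \<union> V" "A k \<inter> U \<noteq> {}" "A k \<inter> V \<noteq> {}"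
    unfolding eventually_sequentially by blast
  then show False using conn[of k] UV unfolding connected_def by blast
qed

lemma kuratowski_limit_continuum:
  assumes lim: "kuratowski_limit A L" and Z: "compact Z" and AZ: "\<And>k. A k \<subseteq> Z"
    and cont: "\<And>k. continuum (A k)"
  shows "continuum L"
proof -
  have ne: "A k \<noteq> {}" for k using cont unfolding continuum_def by blast
  have "L \<subseteq> Z" by (rule kuratowski_limit_subset[OF lim ne compact_imp_closed[OF Z] AZ])
  then have "compact L"
    using compact_Int_closed[OF Z kuratowski_limit_closed[OF lim ne]] by (simp add: inf_absorb2)
  moreover have "connected L"
    using kuratowski_limit_connected[OF lim Z AZ ne] cont unfolding continuum_def by blast
  ultimately show ?thesis
    using kuratowski_limit_nonempty[OF lim Z AZ ne] unfolding continuum_def by blast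
qed

text \<open>
  A uniformly bounded sequence of \<open>1\<close>-Lipschitz real functions has a subsequence converging
  pointwise on a compact set: diagonalise over a countable dense subset
  (\<open>function_convergent_subsequence\<close>) and use the Lipschitz bound to get Cauchy sequences
  everywhere.
\<close>
lemma lipschitz_convergent_subseq:
  fixes F :: "nat \<Rightarrow> 'a::metric_space \<Rightarrow> real"
  assumes Z: "compact Z" and lip: "\<And>n x y. \<bar>F n x - F n y\<bar> \<le> dist x y"
    and bd: "\<And>n x. x \<in> Z \<Longrightarrow> \<bar>F n x\<bar> \<le> M"
  shows "\<exists>r::nat \<Rightarrow> nat. strict_mono r \<and> (\<forall>z\<in>Z. convergent (\<lambda>k. F (r k) z))"
proof -
  have "\<forall>j::nat. \<exists>T. finite T \<and> T \<subseteq> Z \<and> Z \<subseteq> (\<Union>x\<in>T. ball x (1 / real (Suc j)))"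
    using seq_compact_imp_totally_bounded[OF compact_imp_seq_compact[OF Z]] by simp
  then obtain T where T: "\<And>j. finite (T j)" "\<And>j. T j \<subseteq> Z"
    "\<And>j. Z \<subseteq> (\<Union>x\<in>T j. ball x (1 / real (Suc j)))"
    by metis
  have countable: "countable (\<Union>j. T j)" using T(1) by (simp add: countable_finite)
  have bounded: "norm (F n x) \<le> M" if "x \<in> (\<Union>j. T j)" for n x
    using bd T(2) that by auto
  obtain r where r: "strict_mono r"
    and conv: "\<And>x. x \<in> (\<Union>j. T j) \<Longrightarrow> \<exists>l. (\<lambda>n. F (r n) x) \<longlonglongrightarrow> l"
    by (rule function_convergent_subsequence[of "\<Union>j. T j" F M, OF countable bounded])
      (assumption | rule that)+
  have "Cauchy (\<lambda>k. F (r k) z)" if "z \<in> Z" for z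
    unfolding Cauchy_def
  proof (intro allI impI)
    fix e :: real assume "e > 0"
    then obtain j where j: "inverse (real (Suc j)) < e/3"
      by (meson divide_pos_pos reals_Archimedean zero_less_numeral)
    obtain p where p: "p \<in> T j" "dist p z < 1 / real (Suc j)" using T(3)[of j] \<open>z \<in> Z\<close> by auto
    have "Cauchy (\<lambda>k. F (r k) p)" using conv p(1) convergent_Cauchy convergent_def by blast
    then obtain N where N: "\<forall>a\<ge>N. \<forall>b\<ge>N. dist (F (r a) p) (F (r b) p) < e/3"
      unfolding Cauchy_def using \<open>e > 0\<close> by (meson divide_pos_pos zero_less_numeral)
    have near1: "dist (F k z) (F k p) < e/3" for k
      using lip[of k z p] p(2) j by (simp add: dist_real_def dist_commute inverse_eq_divide)
    have near2: "dist (F k p) (F k z) < e/3" for k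
      using near1[of k] by (simp add: dist_commute)
    have "dist (F (r a) z) (F (r b) z) < e" if "a \<ge> N" "b \<ge> N" for a b
      using dist_triangle[of "F (r a) z" "F (r b) z" "F (r a) p"]
        dist_triangle[of "F (r a) p" "F (r b) z" "F (r b) p"]
        near1[of "r a"] near2[of "r b"] N that by fastforce
    then show "\<exists>N. \<forall>a\<ge>N. \<forall>b\<ge>N. dist (F (r a) z) (F (r b) z) < e" by blast
  qed
  then show ?thesis using r Cauchy_convergent_iff by blast
qed

text \<open>
  The distance functions \<open>infdist _ (A k)\<close> are
  \<open>1\<close>-Lipschitz and bounded on \<open>Z\<close>; the limit set is the zero set of their pointwise limit.
\<close>
lemma kuratowski_selection:
  fixes Z :: "'a::metric_space set" and A :: "nat \<Rightarrow> 'a set"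
  assumes Z: "compact Z" and AZ: "\<And>k. A k \<subseteq> Z" and ne: "\<And>k. A k \<noteq> {}"
  obtains r L where "strict_mono r" "kuratowski_limit (\<lambda>k. A (r k)) L"
proof -
  obtain M where M: "\<forall>x\<in>Z. \<forall>y\<in>Z. dist x y \<le> M"
    using compact_imp_bounded[OF Z] unfolding bounded_two_points by blast
  have bd: "\<bar>infdist x (A n)\<bar> \<le> M" if "x \<in> Z" for n x
  proof -
    obtain a where a: "a \<in> A n" using ne by blast
    have "infdist x (A n) \<le> dist x a" using a by (rule infdist_le)
    also have "\<dots> \<le> M" using M that a AZ by blast
    finally show ?thesis by (simp add: infdist_nonneg)
  qed
  obtain r :: "nat \<Rightarrow> nat" where r: "strict_mono r"
    and cv: "\<forall>z\<in>Z. convergent (\<lambda>k. infdist z (A (r k)))"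
    using lipschitz_convergent_subseq[of Z "\<lambda>k z. infdist z (A k)" M, OF Z infdist_triangle_abs bd]
    by blast
  define h where "h z = lim (\<lambda>k. infdist z (A (r k)))" for z
  have h: "(\<lambda>k. infdist z (A (r k))) \<longlonglongrightarrow> h z" if "z \<in> Z" for z
    unfolding h_def using cv that convergent_LIMSEQ_iff by blast
  have "kuratowski_limit (\<lambda>k. A (r k)) {z\<in>Z. h z = 0}"
    unfolding kuratowski_limit_def
  proof (intro conjI ballI allI impI)
    fix l assume "l \<in> {z\<in>Z. h z = 0}"
    then show "(\<lambda>k. infdist l (A (r k))) \<longlonglongrightarrow> 0" using h[of l] by simp
  next
    fix s w z assume s: "strict_mono s" and w: "\<forall>k. w k \<in> A (r (s k))" and wz: "w \<longlonglongrightarrow> z"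
    have "z \<in> Z"
      using compact_imp_closed[OF Z] w AZ wz unfolding closed_sequential_limits by blast
    have "(\<lambda>k. infdist z (A (r (s k)))) \<longlonglongrightarrow> h z"
      using LIMSEQ_subseq_LIMSEQ[OF h[OF \<open>z \<in> Z\<close>] s] by (simp add: o_def)
    moreover have "(\<lambda>k. infdist z (A (r (s k)))) \<longlonglongrightarrow> 0"
    proof (rule Lim_null_comparison[OF always_eventually])
      show "\<forall>k. norm (infdist z (A (r (s k)))) \<le> dist (w k) z"
        using w by (simp add: infdist_nonneg infdist_le dist_commute)
      show "(\<lambda>k. dist (w k) z) \<longlonglongrightarrow> 0" using wz by (rule tendsto_dist_iff[THEN iffD1])
    qed
    ultimately have "h z = 0" by (rule LIMSEQ_unique)
    with \<open>z \<in> Z\<close> show "z \<in> {z\<in>Z. h z = 0}" by simp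
  qed
  then show thesis by (rule that[OF r])
qed

lemma uniform_limit_tendsto_along:
  fixes F :: "nat \<Rightarrow> 'a::metric_space \<Rightarrow> 'c::metric_space"
  assumes U: "uniform_limit Z F g sequentially" and g: "isCont g c"
    and w: "\<And>k. w k \<in> Z" and wc: "w \<longlonglongrightarrow> c"
  shows "(\<lambda>k. F k (w k)) \<longlonglongrightarrow> g c"
proof -
  have "(\<lambda>k. dist (F k (w k)) (g (w k))) \<longlonglongrightarrow> 0"
    unfolding tendsto_iff
  proof (intro allI impI)
    fix e :: real assume "e > 0"
    then have "\<forall>\<^sub>F k in sequentially. \<forall>x\<in>Z. dist (F k x) (g x) < e" by (rule uniform_limitD[OF U])
    then show "\<forall>\<^sub>F k in sequentially. dist (dist (F k (w k)) (g (w k))) 0 < e"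
      by (rule eventually_mono) (use w in auto)
  qed
  moreover have "(\<lambda>k. dist (g (w k)) (g c)) \<longlonglongrightarrow> 0"
    using isCont_tendsto_compose[OF g wc] by (rule tendsto_dist_iff[THEN iffD1])
  ultimately have "(\<lambda>k. dist (F k (w k)) (g (w k)) + dist (g (w k)) (g c)) \<longlonglongrightarrow> 0"
    using tendsto_add by fastforce
  then have "(\<lambda>k. dist (F k (w k)) (g c)) \<longlonglongrightarrow> 0"
    by (rule Lim_null_comparison[OF always_eventually, rotated]) (simp add: dist_triangle)
  then show ?thesis by (rule tendsto_dist_iff[THEN iffD2])
qed

lemma kuratowski_limit_level_set:
  fixes F :: "nat \<Rightarrow> 'a::metric_space \<Rightarrow> 'c::metric_space"
  assumes lim: "kuratowski_limit A L" and ne: "\<And>k. A k \<noteq> {}" and AZ: "\<And>k. A k \<subseteq> Z"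
    and level: "\<And>k. A k \<subseteq> F k -` {v k}"
    and U: "uniform_limit Z F g sequentially" and g: "continuous_on UNIV g" and v: "v \<longlonglongrightarrow> v0"
  shows "L \<subseteq> g -` {v0}"
proof
  fix l assume "l \<in> L"
  then obtain w where w: "\<And>k. w k \<in> A k" "w \<longlonglongrightarrow> l"
    using kuratowski_limit_approx[OF lim _ ne] by blast
  have wZ: "w k \<in> Z" for k using w(1) AZ by blast
  have "isCont g l" using g by (simp add: continuous_on_eq_continuous_at)
  then have "(\<lambda>k. F k (w k)) \<longlonglongrightarrow> g l" by (rule uniform_limit_tendsto_along[OF U _ wZ w(2)])
  moreover have "(\<lambda>k. F k (w k)) = v" using w(1) level by fastforce
  ultimately show "l \<in> g -` {v0}" using v LIMSEQ_unique by fastforce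
qed

lemma kuratowski_limit_diameter:
  fixes F :: "nat \<Rightarrow> 'a::metric_space \<Rightarrow> 'c::metric_space"
  assumes lim: "kuratowski_limit A L" and Z: "compact Z" and AZ: "\<And>k. A k \<subseteq> Z"
    and A: "\<And>k. compact (A k)" "\<And>k. A k \<noteq> {}" and L: "compact L"
    and Fc: "\<And>k. continuous_on UNIV (F k)" and diam: "\<And>k. c \<le> diameter (F k ` A k)"
    and U: "uniform_limit Z F g sequentially" and g: "continuous_on UNIV g"
  shows "c \<le> diameter (g ` L)"
proof -
  have "\<exists>p. p \<in> A k \<times> A k \<and> c \<le> dist (F k (fst p)) (F k (snd p))" for k
  proof -
    have "compact (F k ` A k)" using A(1) Fc continuous_on_subset compact_continuous_image by blast
    then obtain a b where "a \<in> A k" "b \<in> A k" "dist (F k a) (F k b) = diameter (F k ` A k)"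
      using diameter_compact_attained[of "F k ` A k"] A(2) by blast
    then show ?thesis using diam[of k] by force
  qed
  then obtain p where p: "\<And>k. p k \<in> A k \<times> A k" "\<And>k. c \<le> dist (F k (fst (p k))) (F k (snd (p k)))"
    by metis
  have "\<forall>k. p k \<in> Z \<times> Z" using p(1) AZ by (auto simp: mem_Times_iff)
  then obtain s q where s: "strict_mono s" and pq: "(p \<circ> s) \<longlonglongrightarrow> q"
    using compact_imp_seq_compact[OF compact_Times[OF Z Z]] unfolding seq_compact_def by blast
  have fst: "(\<lambda>k. fst (p (s k))) \<longlonglongrightarrow> fst q" and snd: "(\<lambda>k. snd (p (s k))) \<longlonglongrightarrow> snd q"
    using tendsto_fst[OF pq] tendsto_snd[OF pq] by (simp_all add: o_def)
  have inL: "fst q \<in> L" "snd q \<in> L"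
    using kuratowski_limit_upper[OF lim s _ fst] kuratowski_limit_upper[OF lim s _ snd] p(1)
    by (auto simp: mem_Times_iff)
  have U': "uniform_limit Z (\<lambda>k. F (s k)) g sequentially"
    by (rule filterlim_compose[OF U filterlim_subseq[OF s]])
  have gc: "isCont g x" for x using g by (simp add: continuous_on_eq_continuous_at)
  have "(\<lambda>k. dist (F (s k) (fst (p (s k)))) (F (s k) (snd (p (s k)))))
      \<longlonglongrightarrow> dist (g (fst q)) (g (snd q))"
    using p(1) AZ
    by (intro tendsto_dist uniform_limit_tendsto_along[OF U' gc _ fst]
        uniform_limit_tendsto_along[OF U' gc _ snd]) (auto simp: mem_Times_iff)
  then have "c \<le> dist (g (fst q)) (g (snd q))"
    by (rule LIMSEQ_le_const) (use p(2) in blast)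
  also have "\<dots> \<le> diameter (g ` L)"
    using inL compact_imp_bounded[OF compact_continuous_image[OF continuous_on_subset[OF g] L]]
    by (intro diameter_bounded_bound) auto
  finally show ?thesis .
qed

lemma kuratowski_limit_infdist_ge:
  assumes lim: "kuratowski_limit A L" and ne: "L \<noteq> {}" and s: "strict_mono s"
    and wz: "w \<longlonglongrightarrow> z" and far: "\<And>k. \<delta> \<le> infdist (w k) (A (s k))"
  shows "\<delta> \<le> infdist z L"
  unfolding infdist_notempty[OF ne]
proof (rule cINF_greatest[OF ne])
  fix l assume "l \<in> L"
  have "(\<lambda>k. infdist l (A (s k))) \<longlonglongrightarrow> 0"
    using LIMSEQ_subseq_LIMSEQ[OF kuratowski_limit_lower[OF lim \<open>l \<in> L\<close>] s] by (simp add: o_def)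
  then have "(\<lambda>k. infdist l (A (s k)) + dist (w k) l) \<longlonglongrightarrow> 0 + dist z l"
    by (intro tendsto_intros wz)
  moreover have "\<delta> \<le> infdist l (A (s k)) + dist (w k) l" for k
    using far[of k] infdist_triangle[of "w k" "A (s k)" l] by linarith
  ultimately have "\<delta> \<le> 0 + dist z l" by (intro LIMSEQ_le_const) auto
  then show "\<delta> \<le> dist z l" by simp
qed

lemma compactin_cluster_point:
  fixes s :: "nat \<Rightarrow> 'x"
  assumes K: "compactin T K" and s: "\<And>k. s k \<in> K"
  shows "\<exists>g\<in>K. \<forall>U. openin T U \<and> g \<in> U \<longrightarrow> (\<forall>N. \<exists>k\<ge>N. s k \<in> U)"
proof (rule ccontr)
  assume "\<not> ?thesis"
  then have "\<forall>g\<in>K. \<exists>U. openin T U \<and> g \<in> U \<and> (\<exists>N. \<forall>k\<ge>N. s k \<notin> U)" by auto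
  then obtain U where U: "\<forall>g\<in>K. openin T (U g) \<and> g \<in> U g \<and> (\<exists>N. \<forall>k\<ge>N. s k \<notin> U g)"
    by (rule bchoice[THEN exE]) blast
  then have "\<forall>g\<in>K. \<exists>N. \<forall>k\<ge>N. s k \<notin> U g" by blast
  then obtain N where N: "\<forall>g\<in>K. \<forall>k\<ge>N g. s k \<notin> U g"
    by (rule bchoice[THEN exE]) blast
  have "\<forall>V\<in>U ` K. openin T V" "K \<subseteq> \<Union>(U ` K)" using U by auto
  then obtain F' where F': "finite F'" "F' \<subseteq> U ` K" "K \<subseteq> \<Union>F'"
    using K unfolding compactin_def by meson
  then obtain F where F: "F \<subseteq> K" "finite F" "K \<subseteq> (\<Union>g\<in>F. U g)"
    using finite_subset_image[OF F'(1,2)] by blast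
  define N0 where "N0 = (\<Sum>g\<in>F. N g)"
  obtain g where g: "g \<in> F" "s N0 \<in> U g" using s[of N0] F(3) by blast
  have "N g \<le> N0" unfolding N0_def by (rule member_le_sum[OF g(1) _ F(2)]) simp
  then show False using N g F(1) by blast
qed

lemma compact_open_subbasic:
  assumes "compact C" "open V"
  shows "openin compact_open_topology {h \<in> Cmaps. h ` C \<subseteq> V}"
  unfolding compact_open_topology_def using assms by (intro topology_generated_by_Basis) blast

text \<open>
  Every continuous \<open>g\<close> has a compact-open neighbourhood inside its uniform \<open>e\<close>-ball on a
  compact set \<open>Z\<close>: cover \<open>Z\<close> by finitely many small balls on which \<open>g\<close> oscillates by less
  than \<open>e/2\<close> and prescribe the images of these pieces.
\<close>
lemma compact_open_uniform_nbhd: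
  fixes g :: "'a::metric_space \<Rightarrow> 'c::metric_space"
  assumes g: "g \<in> Cmaps" and Z: "compact Z" and e: "e > 0"
  shows "\<exists>U. openin compact_open_topology U \<and> g \<in> U \<and> (\<forall>h\<in>U. \<forall>z\<in>Z. dist (h z) (g z) < e)"
proof -
  have "continuous_on Z g" using g continuous_on_subset unfolding Cmaps_def by blast
  then have "uniformly_continuous_on Z g" using Z by (rule compact_uniformly_continuous)
  then have "\<forall>\<epsilon>>0. \<exists>d>0. \<forall>x\<in>Z. \<forall>y\<in>Z. dist y x < d \<longrightarrow> dist (g y) (g x) < \<epsilon>"
    unfolding uniformly_continuous_on_def .
  then obtain d where d: "d > 0" "\<forall>x\<in>Z. \<forall>y\<in>Z. dist y x < d \<longrightarrow> dist (g y) (g x) < e/2"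
    using half_gt_zero[OF e] by (elim allE impE exE conjE)
  obtain P where P: "finite P" "P \<subseteq> Z" "Z \<subseteq> (\<Union>p\<in>P. ball p (d/2))"
    using seq_compact_imp_totally_bounded[OF compact_imp_seq_compact[OF Z], rule_format,
        OF half_gt_zero[OF d(1)]] by (elim exE conjE)
  define B where "B p = {h \<in> Cmaps. h ` (Z \<inter> cball p (d/2)) \<subseteq> ball (g p) (e/2)}" for p
  define U where "U = \<Inter>(insert Cmaps (B ` P))"
  have "openin compact_open_topology Cmaps" using compact_open_subbasic[of "{}" UNIV] by simp
  moreover have "openin compact_open_topology (B p)" for p
    unfolding B_def by (intro compact_open_subbasic compact_Int_closed Z) auto
  ultimately have "openin compact_open_topology U"
    unfolding U_def by (intro openin_Inter) (auto simp: P(1))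
  moreover have "g \<in> B p" if "p \<in> P" for p
  proof -
    have "dist (g z) (g p) < e/2" if "z \<in> Z \<inter> cball p (d/2)" for z
      using d that P(2) \<open>p \<in> P\<close> by (auto simp: dist_commute)
    then show ?thesis using g unfolding B_def by (auto simp: dist_commute)
  qed
  then have "g \<in> U" using g unfolding U_def by blast
  moreover have "dist (h z) (g z) < e" if "h \<in> U" "z \<in> Z" for h z
  proof -
    obtain p where p: "p \<in> P" "dist p z < d/2" using P(3) \<open>z \<in> Z\<close> by auto
    have "h \<in> B p" using that(1) p(1) unfolding U_def by blast
    moreover have "z \<in> Z \<inter> cball p (d/2)" using p(2) \<open>z \<in> Z\<close> by simp
    ultimately have "h z \<in> ball (g p) (e/2)" unfolding B_def by blast
    moreover have "dist z p < d" using p(2) d(1) by (simp add: dist_commute)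
    then have "dist (g z) (g p) < e/2" using d(2) p(1) P(2) \<open>z \<in> Z\<close> by blast
    ultimately show ?thesis
      using dist_triangle[of "h z" "g z" "g p"] dist_commute[of "g p" "h z"]
        dist_commute[of "g p" "g z"] by simp
  qed
  ultimately show ?thesis by blast
qed

lemma compact_open_uniform_subseq:
  fixes G :: "nat \<Rightarrow> 'a::metric_space \<Rightarrow> 'c::metric_space"
  assumes K: "compactin compact_open_topology K" "K \<subseteq> Cmaps"
    and G: "\<And>k. G k \<in> K" and Z: "compact Z"
  obtains g and r :: "nat \<Rightarrow> nat"
  where "g \<in> K" "strict_mono r" "uniform_limit Z (\<lambda>k. G (r k)) g sequentially"
proof -
  obtain g where "g \<in> K"
    and cluster: "\<forall>U. openin compact_open_topology U \<and> g \<in> U \<longrightarrow> (\<forall>N. \<exists>k\<ge>N. G k \<in> U)"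
    using compactin_cluster_point[OF K(1) G] by (rule bexE)
  have "g \<in> Cmaps" using \<open>g \<in> K\<close> K(2) by blast
  have "\<forall>j::nat. \<exists>U. openin compact_open_topology U \<and> g \<in> U \<and>
      (\<forall>h\<in>U. \<forall>z\<in>Z. dist (h z) (g z) < 1 / real (Suc j))"
    using compact_open_uniform_nbhd[OF \<open>g \<in> Cmaps\<close> Z] by simp
  then obtain U where "\<forall>j. openin compact_open_topology (U j) \<and> g \<in> U j \<and>
      (\<forall>h\<in>U j. \<forall>z\<in>Z. dist (h z) (g z) < 1 / real (Suc j))"
    by (rule choice[THEN exE])
  then have U: "\<And>j. openin compact_open_topology (U j)" "\<And>j. g \<in> U j"
    "\<And>j h z. h \<in> U j \<Longrightarrow> z \<in> Z \<Longrightarrow> dist (h z) (g z) < 1 / real (Suc j)"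
    by simp_all
  have often: "\<exists>k\<ge>N. G k \<in> U j" for j N
    using cluster U(1,2) by blast
  have "\<exists>r::nat \<Rightarrow> nat. strict_mono r \<and> (\<forall>j. G (r j) \<in> U j)"
    by (rule strict_mono_choice[where P="\<lambda>j k. G k \<in> U j", OF often])
  then obtain r :: "nat \<Rightarrow> nat" where r: "strict_mono r" "\<And>j. G (r j) \<in> U j" by blast
  have "uniform_limit Z (\<lambda>k. G (r k)) g sequentially"
    unfolding uniform_limit_sequentially_iff
  proof (intro allI impI)
    fix e :: real assume "e > 0"
    then obtain N where N: "inverse (real (Suc N)) < e" using reals_Archimedean by blast
    have "dist (G (r j) z) (g z) < e" if "j \<ge> N" "z \<in> Z" for j z
    proof -
      have "dist (G (r j) z) (g z) < 1 / real (Suc j)" using U(3)[OF r(2) \<open>z \<in> Z\<close>] .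
      also have "\<dots> \<le> 1 / real (Suc N)" using \<open>j \<ge> N\<close> by (intro divide_left_mono) auto
      finally show ?thesis using N by (simp add: inverse_eq_divide)
    qed
    then show "\<exists>N. \<forall>j\<ge>N. \<forall>z\<in>Z. dist (G (r j) z) (g z) < e" by blast
  qed
  then show thesis by (rule that[OF \<open>g \<in> K\<close> r(1)])
qed

lemma perfect_map_preimage_convergent:
  fixes f :: "'a::metric_space \<Rightarrow> 'b::metric_space"
  assumes "perfect_map f" "y \<longlonglongrightarrow> y0"
  shows "compact (f -` insert y0 (range y))"
proof -
  have "proper_map euclidean euclidean f"
    using assms(1) unfolding perfect_map_def proper_map_def closed_map_def
    by (auto simp: vimage_def)
  moreover have "compactin euclidean (insert y0 (range y))"
    by (rule compactin_sequence_with_limit) (use assms(2) in auto)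
  ultimately show ?thesis
    using compactin_proper_map_preimage by (fastforce simp: vimage_def)
qed

lemma sequence_outside_property:
  fixes y0 :: "'b::metric_space"
  assumes "\<not> (\<exists>V. open V \<and> y0 \<in> V \<and> (\<forall>y\<in>V. P y))"
  shows "\<exists>y. y \<longlonglongrightarrow> y0 \<and> (\<forall>k. \<not> P (y k))"
proof -
  have "\<exists>y. dist y y0 < 1 / real (Suc k) \<and> \<not> P y" for k :: nat
  proof -
    have "y0 \<in> ball y0 (1 / real (Suc k))" by simp
    then obtain y where "y \<in> ball y0 (1 / real (Suc k))" "\<not> P y" using assms open_ball by blast
    then show ?thesis by (auto simp: dist_commute)
  qed
  then have "\<forall>k. \<exists>y. dist y y0 < 1 / real (Suc k) \<and> \<not> P y" by blast
  then obtain y where "\<forall>k. dist (y k) y0 < 1 / real (Suc k) \<and> \<not> P (y k)"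
    by (rule choice[THEN exE])
  then have y: "\<And>k. dist (y k) y0 < 1 / real (Suc k)" "\<And>k. \<not> P (y k)" by simp_all
  have "(\<lambda>k. dist (y k) y0) \<longlonglongrightarrow> 0"
  proof (rule Lim_null_comparison[OF always_eventually], rule allI)
    show "norm (dist (y k) y0) \<le> 1 / real (Suc k)" for k using y(1)[of k] by simp
    show "(\<lambda>k. 1 / real (Suc k)) \<longlonglongrightarrow> 0"
      using LIMSEQ_inverse_real_of_nat by (simp add: inverse_eq_divide)
  qed
  then have "y \<longlonglongrightarrow> y0" by (rule tendsto_dist_iff[THEN iffD2])
  with y(2) show ?thesis by blast
qed

lemma kuratowski_limit_of_components:
  fixes f :: "'a::metric_space \<Rightarrow> 'b::metric_space" and G :: "nat \<Rightarrow> 'a \<Rightarrow> 'c::metric_space"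
  assumes Z: "compact Z" and f: "continuous_on UNIV f" and y: "y \<longlonglongrightarrow> y0"
    and fibres: "\<And>k. f -` {y k} \<subseteq> Z"
    and U: "uniform_limit Z G g sequentially" and g: "continuous_on UNIV g"
    and xs: "\<And>k. f (xs k) = y k" "xs \<longlonglongrightarrow> x"
    and lim: "kuratowski_limit (\<lambda>k. Ccomp (xs k) (G k) f (y k)) C"
  shows "C \<subseteq> Ccomp x g f y0"
proof -
  define CC where "CC k = Ccomp (xs k) (G k) f (y k)" for k
  have level: "CC k \<subseteq> G k -` {G k (xs k)} \<inter> f -` {y k}" for k
    unfolding CC_def Ccomp_def by (rule connected_component_subset)
  have xsC: "xs k \<in> CC k" for k
    unfolding CC_def Ccomp_def using xs(1) by (simp add: connected_component_refl)
  have ne: "CC k \<noteq> {}" for k using xsC by blast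
  have CZ: "CC k \<subseteq> Z" for k using level fibres by blast
  have conn: "connected (CC k)" for k unfolding CC_def Ccomp_def by simp
  have limC: "kuratowski_limit CC C" using lim unfolding CC_def .
  have "x \<in> C" by (rule kuratowski_limit_upper_id[OF limC xsC xs(2)])
  moreover have "connected C" by (rule kuratowski_limit_connected[OF limC Z CZ ne conn])
  moreover have "C \<subseteq> f -` {y0}"
    by (rule kuratowski_limit_level_set[OF limC ne CZ _ uniform_limit_const f y])
      (use level in blast)
  moreover have "C \<subseteq> g -` {g x}"
  proof (rule kuratowski_limit_level_set[where v="\<lambda>k. G k (xs k)", OF limC ne CZ _ U g])
    show "CC k \<subseteq> G k -` {G k (xs k)}" for k using level by blast
    have "isCont g x" using g by (simp add: continuous_on_eq_continuous_at)
    then show "(\<lambda>k. G k (xs k)) \<longlonglongrightarrow> g x"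
      by (rule uniform_limit_tendsto_along[OF U _ _ xs(2)]) (use xsC CZ in blast)
  qed
  ultimately show ?thesis
    unfolding Ccomp_def by (intro connected_component_maximal) auto
qed

text \<open>
  Suppose \<open>G k \<rightarrow> g\<close> uniformly near the fibres over \<open>y k \<rightarrow> y\<^sub>0\<close>, the continua
  \<open>L k\<close> in the fibres over \<open>y k\<close> converge to \<open>L\<close>, every component \<open>C(x, G k|f\<^sup>-\<^sup>1(y k))\<close>
  with \<open>x \<in> L k\<close> leaves the \<open>\<delta>\<close>-neighbourhood of \<open>L k\<close>, and \<open>x \<in> L\<close>.  Then
  \<open>C(x, g|f\<^sup>-\<^sup>1(y\<^sub>0))\<close> leaves the \<open>\<delta>\<close>-neighbourhood of \<open>L\<close>: approximate \<open>x\<close> by \<open>x\<^sub>k \<in> L k\<close>,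
  pick far points \<open>z\<^sub>k\<close> in their components and pass to limits of the components and of \<open>z\<^sub>k\<close>.
\<close>
lemma far_component_persists:
  fixes f :: "'a::metric_space \<Rightarrow> 'b::metric_space" and G :: "nat \<Rightarrow> 'a \<Rightarrow> 'c::metric_space"
  assumes Z: "compact Z" and f: "continuous_on UNIV f" and y: "y \<longlonglongrightarrow> y0"
    and fibres: "\<And>k. f -` {y k} \<subseteq> Z"
    and U: "uniform_limit Z G g sequentially" and g: "continuous_on UNIV g"
    and lim: "kuratowski_limit LL L" and LL: "\<And>k. LL k \<noteq> {}" "\<And>k. LL k \<subseteq> f -` {y k}"
    and far: "\<And>k x. x \<in> LL k \<Longrightarrow> \<not> Ccomp x (G k) f (y k) \<subseteq> Bset (LL k) \<delta>"
    and x: "x \<in> L"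
  shows "\<not> Ccomp x g f y0 \<subseteq> Bset L \<delta>"
proof
  assume near: "Ccomp x g f y0 \<subseteq> Bset L \<delta>"
  obtain xs where xs: "\<And>k. xs k \<in> LL k" "xs \<longlonglongrightarrow> x"
    using kuratowski_limit_approx[OF lim x LL(1)] by blast
  define CC where "CC k = Ccomp (xs k) (G k) f (y k)" for k
  have CZ: "CC k \<subseteq> Z" for k
    using connected_component_subset fibres unfolding CC_def Ccomp_def by blast
  have "\<forall>k. \<exists>z. z \<in> CC k \<and> \<delta> \<le> infdist z (LL k)"
    using far xs(1) unfolding CC_def Bset_def by (auto simp: not_less subset_iff)
  then obtain zz where zz: "\<And>k. zz k \<in> CC k" "\<And>k. \<delta> \<le> infdist (zz k) (LL k)" by metis
  have "CC k \<noteq> {}" for k using zz(1) by blast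
  then obtain s C where s: "strict_mono s" and limC: "kuratowski_limit (\<lambda>k. CC (s k)) C"
    by (rule kuratowski_selection[OF Z CZ])
  have zzZ: "zz (s k) \<in> Z" for k using zz(1) CZ by blast
  obtain t z where t: "strict_mono t" and zlim: "((\<lambda>k. zz (s k)) \<circ> t) \<longlonglongrightarrow> z"
    using compact_imp_seq_compact[OF Z, unfolded seq_compact_def, rule_format,
        of "\<lambda>k. zz (s k)", OF zzZ] by blast
  have "z \<in> C"
    by (rule kuratowski_limit_upper[OF limC t _ zlim]) (simp add: zz(1))
  moreover have "C \<subseteq> Ccomp x g f y0"
  proof (rule kuratowski_limit_of_components[OF Z f _ _ _ g])
    show "(\<lambda>k. y (s k)) \<longlonglongrightarrow> y0" using LIMSEQ_subseq_LIMSEQ[OF y s] by (simp add: o_def)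
    show "f -` {y (s k)} \<subseteq> Z" for k by (rule fibres)
    show "uniform_limit Z (\<lambda>k. G (s k)) g sequentially"
      by (rule filterlim_compose[OF U filterlim_subseq[OF s]])
    show "f (xs (s k)) = y (s k)" for k using xs(1) LL(2) by blast
    show "(\<lambda>k. xs (s k)) \<longlonglongrightarrow> x" using LIMSEQ_subseq_LIMSEQ[OF xs(2) s] by (simp add: o_def)
    show "kuratowski_limit (\<lambda>k. Ccomp (xs (s k)) (G (s k)) f (y (s k))) C"
      using limC unfolding CC_def .
  qed
  ultimately have "infdist z L < \<delta>" using near unfolding Bset_def by blast
  moreover have "\<delta> \<le> infdist z L"
    using kuratowski_limit_infdist_ge[OF lim _ strict_mono_o[OF s t] zlim] x zz(2) by auto
  ultimately show False by simp
qed

definition violating_continuum ::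
    "('a::metric_space \<Rightarrow> 'b) \<Rightarrow> nat \<Rightarrow> nat \<Rightarrow> 'b \<Rightarrow> ('a \<Rightarrow> 'c::metric_space) \<Rightarrow> 'a set \<Rightarrow> bool" where
  "violating_continuum f m n y G L \<longleftrightarrow> continuum L \<and> L \<subseteq> f -` {y} \<and>
     1 / real n \<le> diameter (G ` L) \<and> (\<forall>x\<in>L. \<not> Ccomp x G f y \<subseteq> Bset L (1 / real m))"

lemma not_in_Kset_witness:
  assumes "G \<in> Cmaps" "G \<notin> Kset f m n y"
  shows "\<exists>L. violating_continuum f m n y G L"
  using assms unfolding Kset_def violating_continuum_def by blast

text \<open>
  A uniform limit \<open>g\<close> of maps \<open>G k\<close> with violating continua \<open>L k\<close> over \<open>y k \<rightarrow> y\<^sub>0\<close> is not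
  in \<open>\<K>(m,n,y\<^sub>0)\<close>: the Kuratowski limit \<open>L\<close> of the \<open>L k\<close> is a continuum in \<open>f\<^sup>-\<^sup>1(y\<^sub>0)\<close> whose
  image under \<open>g\<close> is large, while all its points have far components.
\<close>
lemma uniform_limit_not_in_Kset:
  fixes f :: "'a::metric_space \<Rightarrow> 'b::metric_space" and G :: "nat \<Rightarrow> 'a \<Rightarrow> 'c::metric_space"
  assumes Z: "compact Z" and f: "continuous_on UNIV f" and y: "y \<longlonglongrightarrow> y0"
    and fibres: "\<And>k. f -` {y k} \<subseteq> Z"
    and G: "\<And>k. G k \<in> Cmaps" and U: "uniform_limit Z G g sequentially" and g: "g \<in> Cmaps"
    and lim: "kuratowski_limit LL L"
    and viol: "\<And>k. violating_continuum f m n (y k) (G k) (LL k)"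
  shows "g \<notin> Kset f m n y0"
proof
  assume gK: "g \<in> Kset f m n y0"
  have LL: "continuum (LL k)" "LL k \<subseteq> f -` {y k}" "1 / real n \<le> diameter (G k ` LL k)"
    and far: "\<And>x. x \<in> LL k \<Longrightarrow> \<not> Ccomp x (G k) f (y k) \<subseteq> Bset (LL k) (1 / real m)" for k
    using viol[of k] unfolding violating_continuum_def by auto
  have gc: "continuous_on UNIV g" using g unfolding Cmaps_def by simp
  have ne: "LL k \<noteq> {}" and cpt: "compact (LL k)" for k using LL(1) unfolding continuum_def by auto
  have LZ: "LL k \<subseteq> Z" for k using LL(2) fibres by blast
  have "continuum L" by (rule kuratowski_limit_continuum[OF lim Z LZ LL(1)])
  moreover have "L \<subseteq> f -` {y0}"
    by (rule kuratowski_limit_level_set[OF lim ne LZ LL(2) uniform_limit_const f y])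
  moreover have "1 / real n \<le> diameter (g ` L)"
    using \<open>continuum L\<close> G
    by (intro kuratowski_limit_diameter[OF lim Z LZ cpt ne _ _ LL(3) U gc])
      (auto simp: continuum_def Cmaps_def)
  ultimately obtain x where "x \<in> L" "Ccomp x g f y0 \<subseteq> Bset L (1 / real m)"
    using gK unfolding Kset_def by blast
  then show False using far_component_persists[OF Z f y fibres U gc lim ne LL(2) far] by blast
qed

text \<open>
  Extract a subsequence
  along which \<open>G k\<close> converges uniformly on the compact preimage of \<open>{y\<^sub>0} \<union> {y k}\<close> and the
  continua converge in the sense of Kuratowski.
\<close>
lemma no_violating_sequence:
  fixes f :: "'a::metric_space \<Rightarrow> 'b::metric_space" and G :: "nat \<Rightarrow> 'a \<Rightarrow> 'c::metric_space"
  assumes f: "perfect_map f" and K: "compactin compact_open_topology K" "K \<subseteq> Kset f m n y0"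
    and y: "y \<longlonglongrightarrow> y0" and G: "\<And>k. G k \<in> K"
    and viol: "\<And>k. violating_continuum f m n (y k) (G k) (LL k)"
  shows False
proof -
  define Z where "Z = f -` insert y0 (range y)"
  have Z: "compact Z" unfolding Z_def by (rule perfect_map_preimage_convergent[OF f y])
  have fibres: "f -` {y k} \<subseteq> Z" for k unfolding Z_def by auto
  have fc: "continuous_on UNIV f" using f unfolding perfect_map_def by blast
  have KC: "K \<subseteq> Cmaps" using K(2) unfolding Kset_def by blast
  obtain g r1 where "g \<in> K" "strict_mono r1" and U: "uniform_limit Z (\<lambda>k. G (r1 k)) g sequentially"
    by (rule compact_open_uniform_subseq[OF K(1) KC G Z])
  have "LL (r1 k) \<subseteq> Z" "LL (r1 k) \<noteq> {}" for k
    using viol fibres unfolding violating_continuum_def continuum_def by blast+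
  then obtain r2 L where "strict_mono r2" and lim: "kuratowski_limit (\<lambda>k. LL (r1 (r2 k))) L"
    by (rule kuratowski_selection[OF Z])
  have y': "(\<lambda>k. y (r1 (r2 k))) \<longlonglongrightarrow> y0"
    using LIMSEQ_subseq_LIMSEQ[OF y strict_mono_o[OF \<open>strict_mono r1\<close> \<open>strict_mono r2\<close>]]
    by (simp add: o_def)
  have U': "uniform_limit Z (\<lambda>k. G (r1 (r2 k))) g sequentially"
    by (rule filterlim_compose[OF U filterlim_subseq[OF \<open>strict_mono r2\<close>]])
  have "G k \<in> Cmaps" "g \<in> Cmaps" for k using G KC \<open>g \<in> K\<close> by blast+
  then have "g \<notin> Kset f m n y0"
    by (intro uniform_limit_not_in_Kset[OF Z fc y' fibres _ U' _ lim viol])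
  then show False using \<open>g \<in> K\<close> K(2) by blast
qed

theorem lemma2p5:
  fixes f :: "'a::metric_space \<Rightarrow> 'b::metric_space"
    and g0 :: "'a \<Rightarrow> 'c::complete_space"
    and eps :: "'a \<Rightarrow> real"
    and m n :: nat
    and y0 :: 'b
    and K :: "('a \<Rightarrow> 'c) set"
  assumes "perfect_map f"
    and "m \<ge> 1" and "n \<ge> 1"
    and "g0 \<in> Cmaps"
    and "continuous_on UNIV eps" and "\<And>x. 0 < eps x \<and> eps x \<le> 1/64"
    and "compactin compact_open_topology K"
    and "K \<subseteq> Kset f m n y0 \<inter> Bfun g0 eps"
  shows "\<exists>V. open V \<and> y0 \<in> V \<and> (\<forall>y\<in>V. K \<subseteq> Kset f m n y \<inter> Bfun g0 eps)"
proof (rule ccontr)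
  assume "\<not> ?thesis"
  then obtain y where y: "y \<longlonglongrightarrow> y0" and bad: "\<And>k. \<not> K \<subseteq> Kset f m n (y k) \<inter> Bfun g0 eps"
    using sequence_outside_property[where P="\<lambda>y. K \<subseteq> Kset f m n y \<inter> Bfun g0 eps"] by blast
  have "\<exists>G. G \<in> K \<and> (\<exists>L. violating_continuum f m n (y k) G L)" for k
  proof -
    obtain G where G: "G \<in> K" "G \<notin> Kset f m n (y k)" using bad[of k] assms(8) by blast
    moreover have "G \<in> Cmaps" using G(1) assms(8) unfolding Kset_def by blast
    ultimately show ?thesis using not_in_Kset_witness[of G f m n "y k"] by blast
  qed
  then obtain G where G: "\<forall>k. G k \<in> K \<and> (\<exists>L. violating_continuum f m n (y k) (G k) L)"
    by (metis choice)
  then obtain LL where "\<forall>k. violating_continuum f m n (y k) (G k) (LL k)"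
    by (metis choice)
  then show False
    using no_violating_sequence[OF assms(1,7) _ y, where G=G and LL=LL] G assms(8) by blast
qed

end
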